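(* Let $f(p):=D(a_0,\ldots,a_n;p)$ be an optimal penalty function, i.e. one minimizing the sup-norm $\|D(a_0,\ldots,a_n;\cdot)\|_\infty$ over all choices $a_0,\ldots,a_n\in[0,1]$ (no ordering of the $a_i$ is assumed), and let $M(f):=\{x\in[0,1]: f(x)=\|f\|_\infty\}$ be its set of absolute maxima. Then: (i) $M(f)\cap\{a_0,\ldots,a_n\}=\emptyset$; (ii) $M(f)\cap[0,\min_i a_i)\neq\emptyset$ and $M(f)\cap(\max_i a_i,1]\neq\emptyset$; (iii) $a_0\le 1/2\le a_n$ and $M(f)\cap(a_0,a_n)\neq\emptyset$.
   Context: For an integer $n\ge1$ and $a_0,\ldots,a_n\in[0,1]$ (where $a_k$ is the estimate of the heads-probability $p$ of a biased coin when $k$ heads are observed in $n$ tosses), the penalty (risk) function is $D(a_0,\ldots,a_n;p)=\sum_{k=0}^n \binom{n}{k}p^k(1-p)^{n-k}|p-a_k|$ for $p\in[0,1]$. A choice $a_0,\ldots,a_n$ is called optimal if it minimizes $\|D(a_0,\ldots,a_n;\cdot)\|_\infty$ over $[0,1]$, and the corresponding $D$ is called an optimal penalty function. *)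

theory Defs
  imports Complex_Main
begin

definition penalty :: "nat \<Rightarrow> (nat \<Rightarrow> real) \<Rightarrow> real \<Rightarrow> real" where
  "penalty n a p = (\<Sum>k\<le>n. real (n choose k) * p ^ k * (1 - p) ^ (n - k) * \<bar>p - a k\<bar>)"

definition supnorm :: "nat \<Rightarrow> (nat \<Rightarrow> real) \<Rightarrow> real" where
  "supnorm n a = (SUP p\<in>{0..1}. \<bar>penalty n a p\<bar>)"

definition admissible :: "nat \<Rightarrow> (nat \<Rightarrow> real) \<Rightarrow> bool" where
  "admissible n a \<longleftrightarrow> (\<forall>k\<le>n. a k \<in> {0..1})"

definition optimal :: "nat \<Rightarrow> (nat \<Rightarrow> real) \<Rightarrow> bool" where
  "optimal n a \<longleftrightarrow> admissible n a \<and>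
     (\<forall>b. admissible n b \<longrightarrow> supnorm n a \<le> supnorm n b)"

definition maxset :: "nat \<Rightarrow> (nat \<Rightarrow> real) \<Rightarrow> real set" where
  "maxset n a = {x\<in>{0..1}. penalty n a x = supnorm n a}"

end

theory Submission
  imports Defs "HOL-Analysis.Weierstrass_Theorems"
begin

text \<open>If the estimates can be moved so that the penalty strictly decreases at every point of
  \<open>M(f)\<close>, a small convex step in that direction lowers the sup-norm, contradicting optimality.
  An estimate \<open>a k \<in> (0,1)\<close> is never in \<open>M(f)\<close>, since \<open>f\<close> has a convex kink there. If \<open>M(f)\<close>
  had no point below \<open>min a\<close>, raising a minimal estimate, together with small compensating moves
  of \<open>a 0\<close> and \<open>a n\<close>, would lower \<open>f\<close> on all of \<open>M(f)\<close>; lowering \<open>a 0\<close> and raising \<open>a n\<close>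
  shows in the same way that \<open>M(f)\<close> meets \<open>(a 0, a n)\<close>. Points above \<open>max a\<close> follow by the
  symmetry \<open>p \<mapsto> 1 - p\<close>, and \<open>a 0 \<le> 1/2 \<le> a n\<close> compares \<open>f 0 = a 0\<close> and \<open>f 1 = 1 - a n\<close>
  with the constant estimate \<open>1/2\<close>, whose penalty never exceeds \<open>1/2\<close>.\<close>

lemma penalty_Bernstein: "penalty n a p = (\<Sum>k\<le>n. Bernstein n k p * \<bar>p - a k\<bar>)"
  unfolding penalty_def Bernstein_def by simp

lemma penalty_nonneg: "p \<in> {0..1} \<Longrightarrow> 0 \<le> penalty n a p"
  unfolding penalty_Bernstein by (auto intro!: sum_nonneg mult_nonneg_nonneg Bernstein_nonneg)

lemma continuous_on_penalty: "continuous_on S (penalty n a)"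
  unfolding penalty_def by (intro continuous_intros)

lemma Bernstein_at_0: "Bernstein n k 0 = (if k = 0 then 1 else 0)"
  by (simp add: Bernstein_def)

lemma Bernstein_at_1: "k \<le> n \<Longrightarrow> Bernstein n k 1 = (if k = n then 1 else 0)"
  by (simp add: Bernstein_def)

lemma penalty_at_0: "penalty n a 0 = \<bar>a 0\<bar>"
proof -
  have "penalty n a 0 = (\<Sum>k\<le>n. if k = 0 then \<bar>a k\<bar> else 0)"
    unfolding penalty_Bernstein by (intro sum.cong) (auto simp: Bernstein_at_0)
  then show ?thesis by simp
qed

lemma penalty_at_1: "penalty n a 1 = \<bar>1 - a n\<bar>"
proof -
  have "penalty n a 1 = (\<Sum>k\<le>n. if k = n then \<bar>1 - a k\<bar> else 0)"
    unfolding penalty_Bernstein by (intro sum.cong) (auto simp: Bernstein_at_1)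
  then show ?thesis by simp
qed

lemma supnorm_eq_Sup_penalty: "supnorm n a = (SUP p\<in>{0..1}. penalty n a p)"
  unfolding supnorm_def by (intro SUP_cong refl) (simp add: penalty_nonneg)

lemma supnorm_is_max:
  "\<exists>q\<in>{0..1}. penalty n a q = supnorm n a \<and> (\<forall>p\<in>{0..1}. penalty n a p \<le> penalty n a q)"
proof -
  obtain q where q: "q \<in> {0..1::real}" "\<forall>p\<in>{0..1}. penalty n a p \<le> penalty n a q"
    using continuous_attains_sup[of "{0..1::real}" "penalty n a"] continuous_on_penalty by auto
  then have "supnorm n a = penalty n a q"
    unfolding supnorm_eq_Sup_penalty by (intro cSup_eq_maximum) auto
  with q show ?thesis by auto
qed

lemma supnorm_attained: "\<exists>q\<in>{0..1}. penalty n a q = supnorm n a"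
  using supnorm_is_max by blast

lemma penalty_le_supnorm: "p \<in> {0..1} \<Longrightarrow> penalty n a p \<le> supnorm n a"
  using supnorm_is_max[of n a] by auto

lemma supnorm_less: "(\<And>p. p \<in> {0..1} \<Longrightarrow> penalty n a p < s) \<Longrightarrow> supnorm n a < s"
  using supnorm_attained[of n a] by force

lemma maxset_nonempty: "maxset n a \<noteq> {}"
  using supnorm_attained[of n a] unfolding maxset_def by auto

lemma supnorm_pos: "0 < supnorm n a"
proof (rule ccontr)
  assume "\<not> 0 < supnorm n a"
  then have vanish: "penalty n a p = 0" if "p \<in> {0..1}" for p
    using penalty_le_supnorm[OF that, of n a] penalty_nonneg[OF that, of n a] by linarith
  have "a 0 = 0" "a n = 1"
    using vanish[of 0] vanish[of 1] by (auto simp: penalty_at_0 penalty_at_1)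
  have "0 < Bernstein n 0 (1/2) * \<bar>1/2 - a 0\<bar>"
    using \<open>a 0 = 0\<close> by (simp add: Bernstein_pos)
  also have "\<dots> \<le> penalty n a (1/2)"
    unfolding penalty_Bernstein by (rule member_le_sum) (auto intro!: mult_nonneg_nonneg Bernstein_nonneg)
  finally show False using vanish[of "1/2"] by simp
qed

lemma compact_maxset: "compact (maxset n a)"
proof -
  have "maxset n a = {0..1} \<inter> {p. penalty n a p = supnorm n a}"
    unfolding maxset_def by auto
  moreover have "closed {p. penalty n a p = supnorm n a}"
    by (rule closed_Collect_eq) (auto intro: continuous_on_const continuous_on_penalty)
  ultimately show ?thesis by (simp add: compact_Int_closed)
qed

lemma maxset_gap:
  assumes "c \<notin> maxset n a"
  obtains g where "0 < g" "\<And>p. p \<in> maxset n a \<Longrightarrow> g \<le> \<bar>p - c\<bar>"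
proof -
  have "continuous_on (maxset n a) (\<lambda>p. \<bar>p - c\<bar>)" by (intro continuous_intros)
  then obtain q where "q \<in> maxset n a" "\<forall>p\<in>maxset n a. \<bar>q - c\<bar> \<le> \<bar>p - c\<bar>"
    using continuous_attains_inf[OF compact_maxset maxset_nonempty] by blast
  with assms show ?thesis by (intro that[of "\<bar>q - c\<bar>"]) auto
qed

definition shift_effect :: "nat \<Rightarrow> nat \<Rightarrow> real \<Rightarrow> real \<Rightarrow> real \<Rightarrow> real" where
  "shift_effect n k u v p = Bernstein n k p * (\<bar>p - v\<bar> - \<bar>p - u\<bar>)"

lemma penalty_fun_upd:
  assumes "k \<le> n"
  shows "penalty n (a(k := v)) p = penalty n a p + shift_effect n k (a k) v p"
proof -
  have "penalty n (a(k := v)) p = (\<Sum>i\<le>n. Bernstein n i p * \<bar>p - a i\<bar>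
      + (if i = k then shift_effect n k (a k) v p else 0))"
    unfolding penalty_Bernstein shift_effect_def by (intro sum.cong) (auto simp: algebra_simps)
  also have "\<dots> = penalty n a p + shift_effect n k (a k) v p"
    unfolding penalty_Bernstein sum.distrib using assms by simp
  finally show ?thesis .
qed

lemma shift_effect_toward_right: "u \<le> v \<Longrightarrow> v \<le> p \<Longrightarrow> shift_effect n k u v p = - (v - u) * Bernstein n k p"
  unfolding shift_effect_def by simp

lemma shift_effect_toward_left: "p \<le> v \<Longrightarrow> v \<le> u \<Longrightarrow> shift_effect n k u v p = - (u - v) * Bernstein n k p"
  unfolding shift_effect_def by simp

lemma shift_effect_le: "p \<in> {0..1} \<Longrightarrow> shift_effect n k u v p \<le> \<bar>v - u\<bar> * Bernstein n k p"
  unfolding shift_effect_def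
  by (subst mult.commute, intro mult_left_mono Bernstein_nonneg) auto

lemma Bernstein_first: "Bernstein n 0 p = (1 - p) ^ n"
  by (simp add: Bernstein_def)

lemma Bernstein_last: "Bernstein n n p = p ^ n"
  by (simp add: Bernstein_def)

lemma Bernstein_last_less_first: "1 \<le> n \<Longrightarrow> 0 \<le> p \<Longrightarrow> p < 1/2 \<Longrightarrow> Bernstein n n p < Bernstein n 0 p"
  unfolding Bernstein_first Bernstein_last by (intro power_strict_mono) auto

lemma Bernstein_first_less_last: "1 \<le> n \<Longrightarrow> 1/2 < p \<Longrightarrow> p \<le> 1 \<Longrightarrow> Bernstein n 0 p < Bernstein n n p"
  unfolding Bernstein_first Bernstein_last by (intro power_strict_mono) auto

lemma Bernstein_first_ge: "p \<in> {0..1} \<Longrightarrow> 1 - real n * p \<le> Bernstein n 0 p"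
  using Bernoulli_inequality[of "- p" n] by (simp add: Bernstein_first)

lemma Bernstein_le_pow2_mult:
  assumes "1 \<le> k" "p \<in> {0..1}"
  shows "Bernstein n k p \<le> 2 ^ n * p"
proof -
  have "p ^ k * (1 - p) ^ (n - k) \<le> p * 1"
    using assms by (intro mult_mono power_le_one) (auto simp: power_decreasing[of 1 k p, simplified])
  moreover have "real (n choose k) \<le> 2 ^ n"
    using binomial_le_pow2[of n k] by (metis of_nat_le_iff of_nat_numeral of_nat_power)
  ultimately have "real (n choose k) * (p ^ k * (1 - p) ^ (n - k)) \<le> 2 ^ n * p"
    using assms by (intro mult_mono) auto
  then show ?thesis unfolding Bernstein_def by (simp add: mult.assoc)
qed

lemma Bernstein_ge_power:
  assumes "k \<le> n" "p \<in> {0..1}"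
  shows "p ^ n * (1 - p) ^ n \<le> Bernstein n k p"
proof -
  have "p ^ n * (1 - p) ^ n \<le> p ^ k * (1 - p) ^ (n - k)"
    using assms by (intro mult_mono power_decreasing) auto
  also have "\<dots> \<le> real (n choose k) * (p ^ k * (1 - p) ^ (n - k))"
    using mult_right_mono[of 1 "real (n choose k)" "p ^ k * (1 - p) ^ (n - k)"] assms
    by (simp add: Suc_leI)
  finally show ?thesis unfolding Bernstein_def by (simp add: mult.assoc)
qed

lemma optimal_admissible: "optimal n a \<Longrightarrow> admissible n a"
  unfolding optimal_def by blast

lemma admissible_fun_upd: "admissible n a \<Longrightarrow> v \<in> {0..1} \<Longrightarrow> admissible n (a(k := v))"
  unfolding admissible_def by auto

lemma optimal_supnorm_le_half: "optimal n a \<Longrightarrow> supnorm n a \<le> 1/2"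
proof -
  assume "optimal n a"
  then have "supnorm n a \<le> supnorm n (\<lambda>k. 1/2)"
    unfolding optimal_def admissible_def by simp
  also have "\<dots> \<le> 1/2"
  proof -
    have "penalty n (\<lambda>k. 1/2) p \<le> 1/2" if "p \<in> {0..1}" for p
    proof -
      have "penalty n (\<lambda>k. 1/2) p = \<bar>p - 1/2\<bar>"
        unfolding penalty_Bernstein by (simp add: sum_distrib_right[symmetric])
      then show ?thesis using that by (auto simp: abs_if)
    qed
    then show ?thesis using supnorm_attained[of n "\<lambda>k. 1/2"] by fastforce
  qed
  finally show ?thesis .
qed

lemma optimal_first_le_half: "optimal n a \<Longrightarrow> a 0 \<le> 1/2"
  using optimal_supnorm_le_half[of n a] penalty_le_supnorm[of 0 n a] penalty_at_0[of n a] by auto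

lemma optimal_last_ge_half: "optimal n a \<Longrightarrow> 1/2 \<le> a n"
  using optimal_supnorm_le_half[of n a] penalty_le_supnorm[of 1 n a] penalty_at_1[of n a] by auto

lemma optimal_endpoint_estimates:
  assumes "optimal n a"
  shows "a 0 \<in> {0..1/2}" "a n \<in> {1/2..1}"
  using optimal_admissible[OF assms] optimal_first_le_half[OF assms] optimal_last_ge_half[OF assms]
  unfolding admissible_def by auto

lemma penalty_convex_combination:
  assumes "t \<in> {0..1}" "p \<in> {0..1}"
  shows "penalty n (\<lambda>k. (1 - t) * a k + t * b k) p \<le> (1 - t) * penalty n a p + t * penalty n b p"
proof -
  have "\<bar>p - ((1 - t) * a k + t * b k)\<bar> \<le> (1 - t) * \<bar>p - a k\<bar> + t * \<bar>p - b k\<bar>" for k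
  proof -
    have "p - ((1 - t) * a k + t * b k) = (1 - t) * (p - a k) + t * (p - b k)" by algebra
    also have "\<bar>\<dots>\<bar> \<le> (1 - t) * \<bar>p - a k\<bar> + t * \<bar>p - b k\<bar>"
      using abs_triangle_ineq[of "(1 - t) * (p - a k)" "t * (p - b k)"] assms by (simp add: abs_mult)
    finally show ?thesis .
  qed
  then have "penalty n (\<lambda>k. (1 - t) * a k + t * b k) p
      \<le> (\<Sum>k\<le>n. Bernstein n k p * ((1 - t) * \<bar>p - a k\<bar> + t * \<bar>p - b k\<bar>))"
    unfolding penalty_Bernstein using assms by (intro sum_mono mult_left_mono Bernstein_nonneg) auto
  also have "\<dots> = (1 - t) * penalty n a p + t * penalty n b p"
    unfolding penalty_Bernstein sum_distrib_left sum.distrib[symmetric] by (intro sum.cong) (auto simp: algebra_simps)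
  finally show ?thesis .
qed

lemma admissible_convex_combination:
  assumes "admissible n a" "admissible n b" "t \<in> {0..1}"
  shows "admissible n (\<lambda>k. (1 - t) * a k + t * b k)"
  using assms unfolding admissible_def by (auto intro: convex_bound_le)

lemma penalty_gap_on_compact:
  assumes "compact K" "K \<subseteq> {0..1}" "K \<inter> maxset n a = {}"
  obtains \<delta> where "0 < \<delta>" "\<And>p. p \<in> K \<Longrightarrow> penalty n a p \<le> supnorm n a - \<delta>"
proof (cases "K = {}")
  case False
  then obtain q where q: "q \<in> K" "\<forall>p\<in>K. penalty n a p \<le> penalty n a q"
    using continuous_attains_sup[OF assms(1) _ continuous_on_penalty] by blast
  with assms(2,3) have "penalty n a q < supnorm n a"
    using penalty_le_supnorm[of q n a] unfolding maxset_def by force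
  with q show ?thesis by (intro that[of "supnorm n a - penalty n a q"]) auto
qed (auto intro: that[of 1])

lemma convex_combination_less:
  fixes x y S G \<delta> :: real
  assumes "x \<le> S" "y \<le> G" "0 \<le> S" "0 \<le> G" "0 < \<delta>" "S \<le> y \<Longrightarrow> x \<le> S - \<delta>"
  shows "(1 - \<delta> / (2 * (G + \<delta>))) * x + \<delta> / (2 * (G + \<delta>)) * y < S"
proof -
  define t where "t = \<delta> / (2 * (G + \<delta>))"
  have t: "0 < t" "t \<le> 1" "t * (G + \<delta>) = \<delta> / 2"
    using assms unfolding t_def by (auto simp: field_simps)
  have "(1 - t) * x + t * y < S"
  proof (cases "S \<le> y")
    case True
    have "(1 - t) * x \<le> (1 - t) * (S - \<delta>)" "t * y \<le> t * G"
      using assms True t by (auto intro: mult_left_mono)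
    moreover have "(1 - t) * (S - \<delta>) + t * G = S - \<delta> + t * (G + \<delta>) - t * S"
      by (simp add: algebra_simps)
    moreover have "0 \<le> t * S" using t assms by simp
    ultimately show ?thesis using t(3) assms by linarith
  next
    case False
    then have "t * y < t * S" using t by simp
    moreover have "(1 - t) * x \<le> (1 - t) * S" using assms t by (intro mult_left_mono) auto
    ultimately show ?thesis by (simp add: algebra_simps)
  qed
  then show ?thesis unfolding t_def .
qed

text \<open>An optimal choice cannot be improved at all its points of maximum simultaneously: otherwise a
  small step towards the improvement lowers the penalty below the optimum everywhere, since away
  from the maximum set there is room to spare by compactness.\<close>

lemma optimal_no_uniform_improvement:
  assumes opt: "optimal n a" and b: "admissible n b"
  shows "\<exists>p\<in>maxset n a. penalty n a p \<le> penalty n b p"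
proof (rule ccontr)
  define S where "S = supnorm n a"
  define G where "G = supnorm n b"
  define K where "K = {0..1} \<inter> {p. S \<le> penalty n b p}"
  assume "\<not> ?thesis"
  then have "K \<inter> maxset n a = {}" unfolding K_def maxset_def S_def by force
  moreover have "compact K"
    unfolding K_def by (intro compact_Int_closed closed_Collect_le) (auto intro: continuous_on_penalty)
  ultimately obtain \<delta> where \<delta>: "0 < \<delta>" "\<And>p. p \<in> K \<Longrightarrow> penalty n a p \<le> S - \<delta>"
    using penalty_gap_on_compact[of K n a] unfolding K_def S_def by blast
  define t where "t = \<delta> / (2 * (G + \<delta>))"
  have t: "t \<in> {0..1}"
    using \<delta>(1) supnorm_pos[of n b] unfolding t_def G_def by (auto simp: field_simps)
  define c where "c = (\<lambda>k. (1 - t) * a k + t * b k)"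
  have "penalty n c p < S" if p: "p \<in> {0..1}" for p
  proof -
    have "penalty n c p \<le> (1 - t) * penalty n a p + t * penalty n b p"
      unfolding c_def using penalty_convex_combination t p by simp
    also have "\<dots> < S"
      unfolding t_def using penalty_le_supnorm[OF p] supnorm_pos[of n a] supnorm_pos[of n b] p \<delta>
      by (intro convex_combination_less) (auto simp: S_def G_def K_def)
    finally show ?thesis .
  qed
  then have "supnorm n c < supnorm n a" unfolding S_def by (rule supnorm_less)
  moreover have "admissible n c"
    unfolding c_def using admissible_convex_combination optimal_admissible[OF opt] b t by simp
  ultimately show False using opt unfolding optimal_def by (meson not_le)
qed

text \<open>The second difference \<open>f (x + h) + f (x - h) - 2 f x\<close> is \<open>o(h) + (W (x + h) + W (x - h)) h\<close>,
  hence positive for small \<open>h > 0\<close>.\<close>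

lemma not_local_max_at_kink:
  fixes f H W :: "real \<Rightarrow> real"
  assumes H: "H differentiable (at x)" and W: "isCont W x" "0 < W x"
    and f: "\<forall>\<^sub>F y in at x. f y = H y + W y * \<bar>y - x\<bar>" "f x = H x"
  shows "\<not> (\<forall>\<^sub>F y in at x. f y \<le> f x)"
proof
  assume "\<forall>\<^sub>F y in at x. f y \<le> f x"
  with f(1) have "\<forall>\<^sub>F y in at x. H y + W y * \<bar>y - x\<bar> \<le> H x"
    by eventually_elim (use f(2) in simp)
  then obtain r where r: "0 < r" "\<And>y. y \<noteq> x \<Longrightarrow> \<bar>y - x\<bar> < r \<Longrightarrow> H y + W y * \<bar>y - x\<bar> \<le> H x"
    unfolding eventually_at dist_real_def by blast
  obtain D where D: "(H has_real_derivative D) (at x)"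
    using H DERIV_deriv_iff_real_differentiable by blast
  define G where "G h = H (x + h) + H (x - h) - 2 * H x" for h
  have "((\<lambda>h. H (x + h)) has_real_derivative D * 1) (at 0)"
    by (rule DERIV_chain2[of H D "\<lambda>h. x + h" 0, simplified, OF D]) (auto intro!: derivative_eq_intros)
  moreover have "((\<lambda>h. H (x - h)) has_real_derivative D * (-1)) (at 0)"
    by (rule DERIV_chain2[of H D "\<lambda>h. x - h" 0, simplified, OF D]) (auto intro!: derivative_eq_intros)
  ultimately have "(G has_real_derivative D * 1 + D * (-1) - 0) (at 0)"
    unfolding G_def by (intro derivative_intros)
  then have quotient: "((\<lambda>h. G h / h) \<longlongrightarrow> 0) (at 0)"
    unfolding DERIV_def G_def by simp
  have shift: "((\<lambda>h. x + h) \<longlongrightarrow> x) (at 0)" "((\<lambda>h. x - h) \<longlongrightarrow> x) (at 0)"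
    using tendsto_add[OF tendsto_const[of x] tendsto_ident_at[of 0 UNIV]]
      tendsto_diff[OF tendsto_const[of x] tendsto_ident_at[of 0 UNIV]] by simp_all
  have "((\<lambda>h. G h / h + W (x + h) + W (x - h)) \<longlongrightarrow> 0 + W x + W x) (at 0)"
    by (intro tendsto_add quotient isCont_tendsto_compose[OF W(1) shift(1)]
        isCont_tendsto_compose[OF W(1) shift(2)])
  then have "((\<lambda>h. G h / h + W (x + h) + W (x - h)) \<longlongrightarrow> 0 + W x + W x) (at_right 0)"
    by (rule tendsto_mono[OF at_le[OF subset_UNIV]])
  moreover have "\<forall>\<^sub>F h in at_right 0. G h / h + W (x + h) + W (x - h) \<le> 0"
    unfolding eventually_at_right_field
  proof (intro exI[of _ r] conjI allI impI \<open>0 < r\<close>)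
    fix h :: real assume h: "0 < h" "h < r"
    have "G h + (W (x + h) + W (x - h)) * h \<le> 0"
      using r(2)[of "x + h"] r(2)[of "x - h"] h unfolding G_def by (simp add: algebra_simps)
    then show "G h / h + W (x + h) + W (x - h) \<le> 0"
      using h by (simp add: divide_le_0_iff add_divide_distrib[symmetric] field_simps)
  qed
  ultimately have "0 + W x + W x \<le> 0" by (rule tendsto_upperbound) simp
  with W(2) show False by simp
qed

lemma abs_eventually_linear:
  fixes c x :: real
  assumes "c \<noteq> x"
  shows "\<forall>\<^sub>F y in at x. \<bar>y - c\<bar> = sgn (x - c) * (y - c)"
  unfolding eventually_at dist_real_def
  using assms by (intro exI[of _ "\<bar>x - c\<bar>"]) (auto simp: sgn_if abs_if)

lemma penalty_split_at:
  "penalty n a y = (\<Sum>k\<in>{..n} - {k. a k = x}. Bernstein n k y * \<bar>y - a k\<bar>)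
    + (\<Sum>k\<in>{..n} \<inter> {k. a k = x}. Bernstein n k y) * \<bar>y - x\<bar>"
proof -
  have "(\<Sum>k\<in>{..n} \<inter> {k. a k = x}. Bernstein n k y * \<bar>y - a k\<bar>)
      = (\<Sum>k\<in>{..n} \<inter> {k. a k = x}. Bernstein n k y) * \<bar>y - x\<bar>"
    unfolding sum_distrib_right by (intro sum.cong) auto
  moreover have "penalty n a y = (\<Sum>k\<in>{..n} \<inter> {k. a k = x}. Bernstein n k y * \<bar>y - a k\<bar>)
      + (\<Sum>k\<in>{..n} - {k. a k = x}. Bernstein n k y * \<bar>y - a k\<bar>)"
    unfolding penalty_Bernstein by (rule sum.Int_Diff) simp
  ultimately show ?thesis by linarith
qed

lemma interior_estimate_notin_maxset:
  assumes "j \<le> n" "0 < a j" "a j < 1"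
  shows "a j \<notin> maxset n a"
proof
  define x where "x = a j"
  assume "a j \<in> maxset n a"
  then have "penalty n a y \<le> penalty n a x" if "y \<in> {0..1}" for y
    using penalty_le_supnorm[OF that] unfolding maxset_def x_def by auto
  moreover have "\<forall>\<^sub>F y in at x. y \<in> {0..1}"
    unfolding eventually_at dist_real_def using assms
    by (intro exI[of _ "min x (1 - x)"]) (auto simp: x_def)
  ultimately have max: "\<forall>\<^sub>F y in at x. penalty n a y \<le> penalty n a x"
    by (auto elim: eventually_mono)
  define I where "I = {..n} - {k. a k = x}"
  define J where "J = {..n} \<inter> {k. a k = x}"
  define H where "H y = (\<Sum>k\<in>I. Bernstein n k y * (sgn (x - a k) * (y - a k)))" for y
  define W where "W y = (\<Sum>k\<in>J. Bernstein n k y)" for y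
  have split: "penalty n a y = (\<Sum>k\<in>I. Bernstein n k y * \<bar>y - a k\<bar>) + W y * \<bar>y - x\<bar>" for y
    unfolding I_def W_def J_def by (rule penalty_split_at)
  have "\<forall>\<^sub>F y in at x. \<forall>k\<in>I. \<bar>y - a k\<bar> = sgn (x - a k) * (y - a k)"
    by (intro eventually_ball_finite ballI abs_eventually_linear) (auto simp: I_def)
  then have "\<forall>\<^sub>F y in at x. penalty n a y = H y + W y * \<bar>y - x\<bar>"
    by eventually_elim (simp add: split H_def)
  moreover have "penalty n a x = H x"
    by (simp add: split H_def abs_sgn mult.commute)
  moreover have "H differentiable (at x)"
    unfolding H_def Bernstein_def by (auto simp: I_def intro!: derivative_intros)
  moreover have "isCont W x"
    unfolding W_def Bernstein_def by (intro continuous_intros)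
  moreover have "0 < W x"
  proof -
    have "0 < Bernstein n j x" using assms by (intro Bernstein_pos) (auto simp: x_def)
    also have "\<dots> \<le> W x"
      unfolding W_def using assms \<open>0 < Bernstein n j x\<close>
      by (intro member_le_sum) (auto intro!: Bernstein_nonneg simp: J_def x_def)
    finally show ?thesis .
  qed
  ultimately show False using not_local_max_at_kink max by blast
qed

lemma optimal_first_notin_maxset:
  assumes opt: "optimal n a"
  shows "a 0 \<notin> maxset n a"
proof
  assume max: "a 0 \<in> maxset n a"
  have "0 \<le> a 0" "a 0 < 1" using optimal_endpoint_estimates[OF opt] by auto
  moreover have "a 0 \<noteq> 0"
    using max supnorm_pos[of n a] penalty_at_0[of n a] unfolding maxset_def by auto
  ultimately show False using interior_estimate_notin_maxset[of 0 n a] max by simp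
qed

lemma optimal_last_notin_maxset:
  assumes opt: "optimal n a"
  shows "a n \<notin> maxset n a"
proof
  assume max: "a n \<in> maxset n a"
  have "0 < a n" "a n \<le> 1" using optimal_endpoint_estimates[OF opt] by auto
  moreover have "a n \<noteq> 1"
    using max supnorm_pos[of n a] penalty_at_1[of n a] unfolding maxset_def by auto
  ultimately show False using interior_estimate_notin_maxset[of n n a] max by simp
qed

lemma optimal_maxset_endpoint_gap:
  assumes "optimal n a"
  obtains g where "0 < g" "\<And>p. p \<in> maxset n a \<Longrightarrow> g \<le> \<bar>p - a 0\<bar>"
    "\<And>p. p \<in> maxset n a \<Longrightarrow> g \<le> \<bar>p - a n\<bar>"
proof -
  obtain g0 where "0 < g0" "\<And>p. p \<in> maxset n a \<Longrightarrow> g0 \<le> \<bar>p - a 0\<bar>"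
    using maxset_gap[OF optimal_first_notin_maxset[OF assms]] by blast
  moreover obtain gn where "0 < gn" "\<And>p. p \<in> maxset n a \<Longrightarrow> gn \<le> \<bar>p - a n\<bar>"
    using maxset_gap[OF optimal_last_notin_maxset[OF assms]] by blast
  ultimately show ?thesis by (intro that[of "min g0 gn"]) force+
qed

lemma admissible_one_in_maxset_imp_last_less_one:
  "admissible n a \<Longrightarrow> 1 \<in> maxset n a \<Longrightarrow> a n < 1"
  using supnorm_pos[of n a] penalty_at_1[of n a] unfolding maxset_def admissible_def by fastforce

text \<open>Raising a last estimate \<open>c\<close> by \<open>t (1 - c)\<^sup>n / 2\<close> costs at most half of what moving
  any other estimate by \<open>t\<close> towards \<open>p\<close> gains, at every \<open>p\<close> at distance \<open>t\<close> from \<open>c\<close>.\<close>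

lemma shift_effect_raise_last_le:
  assumes "j \<le> n" "p \<in> {0..1}" "c \<in> {0..1}" "0 \<le> t" "t \<le> \<bar>p - c\<bar>"
  shows "shift_effect n n c (min 1 (c + t * ((1 - c) ^ n / 2))) p \<le> t / 2 * Bernstein n j p"
proof -
  define v where "v = min 1 (c + t * ((1 - c) ^ n / 2))"
  have "(1 - c) ^ n \<le> 1" using assms by (intro power_le_one) auto
  then have "0 \<le> t * ((1 - c) ^ n / 2)" "t * ((1 - c) ^ n / 2) \<le> t"
    using assms mult_left_mono[of "(1 - c) ^ n" 1 t] by auto
  then have small: "0 \<le> v - c" "v - c \<le> t * ((1 - c) ^ n / 2)" "v - c \<le> t"
    using assms unfolding v_def by (auto simp: min_def)
  have Bj: "0 \<le> Bernstein n j p" using assms by (auto intro: Bernstein_nonneg)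
  consider "c + t \<le> p" | "p \<le> c - t" using assms by linarith
  then show ?thesis
  proof cases
    case 1
    then have "shift_effect n n c v p = - (v - c) * Bernstein n n p"
      using small by (intro shift_effect_toward_right) auto
    also have "\<dots> \<le> 0" using small assms by (simp add: Bernstein_last mult_nonpos_nonneg)
    moreover have "0 \<le> t / 2 * Bernstein n j p" using Bj assms by simp
    ultimately show ?thesis unfolding v_def by linarith
  next
    case 2
    have "shift_effect n n c v p \<le> (v - c) * p ^ n"
      using shift_effect_le[OF assms(2), of n n c v] small by (simp add: Bernstein_last)
    also have "\<dots> \<le> t * ((1 - c) ^ n / 2) * p ^ n"
      using small assms by (intro mult_right_mono) auto
    also have "\<dots> = t / 2 * (p ^ n * (1 - c) ^ n)" by simp
    also have "\<dots> \<le> t / 2 * (p ^ n * (1 - p) ^ n)"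
      using 2 assms by (intro mult_left_mono power_mono) auto
    also have "\<dots> \<le> t / 2 * Bernstein n j p"
      using Bernstein_ge_power[OF assms(1,2)] assms by (intro mult_left_mono) auto
    finally show ?thesis unfolding v_def .
  qed
qed

lemma optimal_maxset_below_minimal_estimate:
  assumes opt: "optimal n a" and j: "j < n" and min: "\<forall>k\<le>n. a j \<le> a k"
    and notin: "a j \<notin> maxset n a"
  shows "\<exists>p\<in>maxset n a. p < a j"
proof (rule ccontr)
  assume "\<not> ?thesis"
  then have above: "a j \<le> p" if "p \<in> maxset n a" for p using that by force
  obtain gj where gj: "0 < gj" "\<And>p. p \<in> maxset n a \<Longrightarrow> gj \<le> \<bar>p - a j\<bar>"
    using maxset_gap[OF notin] by blast
  obtain gn where gn: "0 < gn" "\<And>p. p \<in> maxset n a \<Longrightarrow> gn \<le> \<bar>p - a n\<bar>"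
    using maxset_gap[OF optimal_last_notin_maxset[OF opt]] by blast
  define t where "t = min gj gn"
  have t: "0 < t" "\<And>p. p \<in> maxset n a \<Longrightarrow> a j + t \<le> p" "\<And>p. p \<in> maxset n a \<Longrightarrow> t \<le> \<bar>p - a n\<bar>"
    using gj gn above unfolding t_def by force+
  have a: "a j \<in> {0..1}" "a n \<in> {0..1}"
    using optimal_admissible[OF opt] j unfolding admissible_def by auto
  obtain p0 where "p0 \<in> maxset n a" using maxset_nonempty by blast
  then have "a j + t \<le> 1" using t(2) unfolding maxset_def by force
  \<comment> \<open>raising \<open>a j\<close> does not help at \<open>p = 1\<close>, so \<open>a n\<close> is raised slightly as well\<close>
  define v where "v = min 1 (a n + t * ((1 - a n) ^ n / 2))"
  define b where "b = (a(j := a j + t))(n := v)"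
  have "admissible n b"
    unfolding b_def v_def using optimal_admissible[OF opt] a t(1) \<open>a j + t \<le> 1\<close>
    by (intro admissible_fun_upd) auto
  then obtain p where p: "p \<in> maxset n a" "penalty n a p \<le> penalty n b p"
    using optimal_no_uniform_improvement[OF opt] by blast
  then have p01: "p \<in> {0..1}" unfolding maxset_def by simp
  have "penalty n b p = penalty n a p + shift_effect n j (a j) (a j + t) p + shift_effect n n (a n) v p"
    unfolding b_def using j by (simp add: penalty_fun_upd)
  moreover have "shift_effect n j (a j) (a j + t) p + shift_effect n n (a n) v p < 0"
  proof (cases "p = 1")
    case True
    then have "a n < 1"
      using admissible_one_in_maxset_imp_last_less_one optimal_admissible[OF opt] p(1) by simp
    then have "a n < v" "v \<le> 1" unfolding v_def using t(1) by auto
    then have "shift_effect n n (a n) v p < 0" using True by (simp add: shift_effect_toward_right Bernstein_last)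
    moreover have "shift_effect n j (a j) (a j + t) p = 0"
      using True j by (simp add: shift_effect_def Bernstein_at_1)
    ultimately show ?thesis by simp
  next
    case False
    then have "0 < Bernstein n j p"
      using t(2)[OF p(1)] t(1) a p01 j by (intro Bernstein_pos) auto
    moreover have "shift_effect n j (a j) (a j + t) p = - t * Bernstein n j p"
      using t(1) t(2)[OF p(1)] by (simp add: shift_effect_toward_right)
    moreover have "shift_effect n n (a n) v p \<le> t / 2 * Bernstein n j p"
      unfolding v_def using j p01 a t(1) t(3)[OF p(1)] by (intro shift_effect_raise_last_le) auto
    moreover have "0 < t * Bernstein n j p" using t(1) \<open>0 < Bernstein n j p\<close> by simp
    ultimately show ?thesis by linarith
  qed
  ultimately show False using p(2) by linarith
qed

lemma shift_effects_left_of_first: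
  fixes c0 cn d p t :: real
  assumes n: "1 \<le> n" and j: "0 < j" and p: "p \<in> {0..1}" "p \<le> c0 - t"
    and t: "0 < t" "t \<le> \<bar>p - cn\<bar>" and c: "c0 \<le> 1/2" "cn \<in> {0..1}"
    and d: "0 < d" "t * d * (real n + d * 2 ^ n + 1) \<le> 1/2"
  shows "shift_effect n 0 c0 (c0 - t) p + shift_effect n j 0 (t * d) p
    + shift_effect n n cn (min 1 (cn + t * ((1 - cn) ^ n / 2))) p < 0"
proof -
  have first: "shift_effect n 0 c0 (c0 - t) p = - t * Bernstein n 0 p"
    using p t by (simp add: shift_effect_toward_left)
  have last: "shift_effect n n cn (min 1 (cn + t * ((1 - cn) ^ n / 2))) p \<le> t / 2 * Bernstein n n p"
    using p c t by (intro shift_effect_raise_last_le) auto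
  have "Bernstein n n p < Bernstein n 0 p"
    using p t c n by (intro Bernstein_last_less_first) auto
  show ?thesis
  proof (cases "t * d \<le> p")
    case True
    have "shift_effect n j 0 (t * d) p \<le> 0"
      using True t d p by (simp add: shift_effect_toward_right Bernstein_nonneg)
    moreover have "t / 2 * Bernstein n n p < t * Bernstein n 0 p"
      using \<open>Bernstein n n p < Bernstein n 0 p\<close> Bernstein_nonneg[of p n n] p t by simp
    ultimately show ?thesis using first last by linarith
  next
    case False
    have "shift_effect n j 0 (t * d) p \<le> t * d * Bernstein n j p"
      using shift_effect_le[OF p(1), of n j 0 "t * d"] t d by simp
    also have "\<dots> \<le> t * d * (2 ^ n * p)"
      using j p t d by (intro mult_left_mono Bernstein_le_pow2_mult) auto
    finally have "shift_effect n j 0 (t * d) p \<le> t * d * (2 ^ n * p)" .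
    moreover have "t / 2 * Bernstein n n p \<le> t / 2 * p"
      using p n t power_decreasing[of 1 n p] by (intro mult_left_mono) (auto simp: Bernstein_last)
    moreover have "t * (1 - real n * p) \<le> t * Bernstein n 0 p"
      using Bernstein_first_ge[OF p(1), of n] t by simp
    moreover have "p * (real n + d * 2 ^ n + 1) < t * d * (real n + d * 2 ^ n + 1)"
    proof (rule mult_strict_right_mono)
      have "0 < d * 2 ^ n" using d by simp
      then show "0 < real n + d * 2 ^ n + 1" by linarith
    qed (use False in simp)
    moreover have "t * (p * (real n + d * 2 ^ n + 1)) < t * (1/2)"
      using calculation(4) d(2) t(1) by (intro mult_strict_left_mono) auto
    moreover have "t * (p * (real n + d * 2 ^ n + 1)) = t * (real n * p) + t * d * (2 ^ n * p) + t * p"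
      "t * (1 - real n * p) = t - t * (real n * p)" "t / 2 * p = t * p / 2"
      by (simp_all add: algebra_simps)
    moreover have "0 \<le> t * p" using t p by simp
    ultimately have "shift_effect n j 0 (t * d) p + t / 2 * Bernstein n n p < t * Bernstein n 0 p"
      using t by linarith
    then show ?thesis using first last by linarith
  qed
qed

lemma shift_effects_right_of_first:
  fixes c0 cn d p t :: real
  assumes j: "0 < j" "j < n" and p: "p \<in> {0..1}" "c0 + t \<le> p" "p = 1 \<Longrightarrow> cn < 1"
    and t: "0 < t" "t \<le> \<bar>p - cn\<bar>" "t * d \<le> c0" and c: "0 < c0" "cn \<in> {0..1}"
    and d: "d = 1 / c0 ^ n + 1"
  shows "shift_effect n 0 c0 (c0 - t) p + shift_effect n j 0 (t * d) p
    + shift_effect n n cn (min 1 (cn + t * ((1 - cn) ^ n / 2))) p < 0"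
proof -
  define v where "v = min 1 (cn + t * ((1 - cn) ^ n / 2))"
  have "0 < d" unfolding d using c by (simp add: add_pos_pos)
  have first: "shift_effect n 0 c0 (c0 - t) p \<le> t * Bernstein n 0 p"
    using shift_effect_le[OF p(1), of n 0 c0 "c0 - t"] t by simp
  have middle: "shift_effect n j 0 (t * d) p = - (t * d) * Bernstein n j p"
    using shift_effect_toward_right[of 0 "t * d" p n j] t p c \<open>0 < d\<close> by simp
  show ?thesis
  proof (cases "p = 1")
    case True
    then have "cn < v" "v \<le> 1" using p(3) t unfolding v_def by auto
    then have "shift_effect n n cn v p < 0"
      using True by (simp add: shift_effect_toward_right Bernstein_last)
    moreover have "Bernstein n 0 p = 0" "Bernstein n j p = 0"
      using True j by (simp_all add: Bernstein_at_1)
    ultimately show ?thesis using first middle unfolding v_def by simp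
  next
    case False
    then have "0 < p" "p < 1" using p t c by auto
    then have "0 < Bernstein n j p" using j by (intro Bernstein_pos) auto
    have last: "shift_effect n n cn v p \<le> t / 2 * Bernstein n j p"
      unfolding v_def using j p c t by (intro shift_effect_raise_last_le) auto
    have "c0 ^ n * Bernstein n 0 p \<le> p ^ n * (1 - p) ^ n"
      using p t c by (auto simp: Bernstein_first intro!: mult_right_mono power_mono)
    also have "\<dots> \<le> Bernstein n j p"
      using j p by (intro Bernstein_ge_power) auto
    finally have "Bernstein n 0 p \<le> Bernstein n j p / c0 ^ n"
      using c by (simp add: field_simps)
    then have "t * Bernstein n 0 p \<le> t * (Bernstein n j p / c0 ^ n)"
      using t by (intro mult_left_mono) auto
    moreover have "t * d * Bernstein n j p = t * (Bernstein n j p / c0 ^ n) + t * Bernstein n j p"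
      unfolding d by (simp add: algebra_simps)
    moreover have "0 < t * Bernstein n j p" using t \<open>0 < Bernstein n j p\<close> by simp
    moreover have "- (t * d) * Bernstein n j p = - (t * d * Bernstein n j p)"
      "t / 2 * Bernstein n j p = t * Bernstein n j p / 2" by simp_all
    ultimately show ?thesis using first middle last unfolding v_def by linarith
  qed
qed

text \<open>If \<open>0\<close> were a point of maximum while an inner estimate vanishes, lowering \<open>a 0\<close> would help
  near \<open>0\<close>, and the loss this causes to the right of \<open>a 0\<close> is repaid by lifting the vanishing
  estimate \<open>1 / (a 0)\<^sup>n + 1\<close> times as far.\<close>

lemma optimal_inner_zero_estimate_imp_zero_notin_maxset:
  assumes opt: "optimal n a" and j: "0 < j" "j < n" "a j = 0"
  shows "0 \<notin> maxset n a"
proof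
  assume "0 \<in> maxset n a"
  have a: "a 0 \<in> {0..1/2}" "a n \<in> {1/2..1}" by (fact optimal_endpoint_estimates[OF opt])+
  have "0 < a 0"
    using \<open>0 \<in> maxset n a\<close> supnorm_pos[of n a] penalty_at_0[of n a] a unfolding maxset_def by auto
  obtain g where g: "0 < g" "\<And>p. p \<in> maxset n a \<Longrightarrow> g \<le> \<bar>p - a 0\<bar>"
    "\<And>p. p \<in> maxset n a \<Longrightarrow> g \<le> \<bar>p - a n\<bar>"
    using optimal_maxset_endpoint_gap[OF opt] by blast
  define d where "d = 1 / a 0 ^ n + 1"
  define K where "K = real n + d * 2 ^ n + 1"
  have "1 \<le> d" "1 \<le> K" unfolding K_def d_def using \<open>0 < a 0\<close> by auto
  define t where "t = min g (min (a 0 / d) (1 / (2 * d * K)))"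
  have "t \<le> a 0 / d" "t \<le> 1 / (2 * d * K)" unfolding t_def by auto
  then have "t * d \<le> a 0" "t * (2 * d * K) \<le> 1"
    using \<open>1 \<le> d\<close> \<open>1 \<le> K\<close> by (simp_all add: le_divide_eq)
  then have t: "0 < t" "t \<le> g" "t * d \<le> a 0" "t * d * K \<le> 1/2" "t \<le> t * d"
    using g \<open>0 < a 0\<close> \<open>1 \<le> d\<close> \<open>1 \<le> K\<close> unfolding t_def by (auto simp: mult_ac)
  define v where "v = min 1 (a n + t * ((1 - a n) ^ n / 2))"
  define b where "b = ((a(0 := a 0 - t))(j := t * d))(n := v)"
  have "0 \<le> a 0 - t" "a 0 - t \<le> 1" "0 \<le> t * d" "t * d \<le> 1"
    using a(1) t atLeastAtMost_iff[of "a 0" 0 "1/2"] by linarith+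
  moreover have "v \<in> {0..1}" using a t unfolding v_def by auto
  ultimately have "admissible n b"
    unfolding b_def using optimal_admissible[OF opt] by (intro admissible_fun_upd) auto
  then obtain p where p: "p \<in> maxset n a" "penalty n a p \<le> penalty n b p"
    using optimal_no_uniform_improvement[OF opt] by blast
  then have p01: "p \<in> {0..1}" unfolding maxset_def by simp
  have "t \<le> \<bar>p - a n\<bar>" using g(3)[OF p(1)] t(2) by linarith
  have "penalty n b p = penalty n a p + shift_effect n 0 (a 0) (a 0 - t) p
      + shift_effect n j 0 (t * d) p + shift_effect n n (a n) v p"
    unfolding b_def using j by (simp add: penalty_fun_upd)
  moreover have "shift_effect n 0 (a 0) (a 0 - t) p + shift_effect n j 0 (t * d) p
      + shift_effect n n (a n) v p < 0"
  proof -
    consider "p \<le> a 0 - t" | "a 0 + t \<le> p" using g(2)[OF p(1)] t by linarith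
    then show ?thesis
    proof cases
      case 1
      show ?thesis unfolding v_def
        using j p01 1 t a \<open>t \<le> \<bar>p - a n\<bar>\<close> \<open>1 \<le> d\<close> unfolding K_def
        by (intro shift_effects_left_of_first) auto
    next
      case 2
      have "p = 1 \<Longrightarrow> a n < 1"
        using admissible_one_in_maxset_imp_last_less_one optimal_admissible[OF opt] p(1) by blast
      then show ?thesis unfolding v_def
        using j p01 2 t a \<open>t \<le> \<bar>p - a n\<bar>\<close> \<open>0 < a 0\<close>
        by (intro shift_effects_right_of_first) (auto simp: d_def)
    qed
  qed
  ultimately show False using p(2) by linarith
qed

lemma optimal_maxset_meets_middle:
  assumes opt: "optimal n a" and n: "1 \<le> n"
  shows "maxset n a \<inter> {a 0<..<a n} \<noteq> {}"
proof
  assume empty: "maxset n a \<inter> {a 0<..<a n} = {}"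
  have a: "a 0 \<in> {0..1/2}" "a n \<in> {1/2..1}" by (fact optimal_endpoint_estimates[OF opt])+
  obtain t where t: "0 < t" "\<And>p. p \<in> maxset n a \<Longrightarrow> t \<le> \<bar>p - a 0\<bar>"
    "\<And>p. p \<in> maxset n a \<Longrightarrow> t \<le> \<bar>p - a n\<bar>"
    using optimal_maxset_endpoint_gap[OF opt] by blast
  define b where "b = (a(0 := max 0 (a 0 - t)))(n := min 1 (a n + t))"
  have "admissible n b"
    unfolding b_def using optimal_admissible[OF opt] a t(1) by (intro admissible_fun_upd) auto
  then obtain p where p: "p \<in> maxset n a" "penalty n a p \<le> penalty n b p"
    using optimal_no_uniform_improvement[OF opt] by blast
  then have p01: "p \<in> {0..1}" unfolding maxset_def by simp
  have "penalty n b p = penalty n a p + shift_effect n 0 (a 0) (max 0 (a 0 - t)) p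
      + shift_effect n n (a n) (min 1 (a n + t)) p"
    unfolding b_def using n by (simp add: penalty_fun_upd)
  moreover have "shift_effect n 0 (a 0) (max 0 (a 0 - t)) p + shift_effect n n (a n) (min 1 (a n + t)) p < 0"
  proof -
    have "p \<notin> {a 0<..<a n}" using p(1) empty by blast
    then consider "p \<le> a 0 - t" | "a n + t \<le> p" using t(2,3)[OF p(1)] a by force
    then show ?thesis
    proof cases
      case 1
      then have "shift_effect n 0 (a 0) (max 0 (a 0 - t)) p = - t * Bernstein n 0 p"
        using p01 t(1) by (simp add: shift_effect_toward_left)
      moreover have "shift_effect n n (a n) (min 1 (a n + t)) p \<le> t * Bernstein n n p"
        using t(1) a p01
        by (intro order_trans[OF shift_effect_le[OF p01]] mult_right_mono Bernstein_nonneg) auto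
      moreover have "t * Bernstein n n p < t * Bernstein n 0 p"
        using 1 a p01 n t(1) by (simp add: Bernstein_last_less_first)
      ultimately show ?thesis by linarith
    next
      case 2
      then have "shift_effect n n (a n) (min 1 (a n + t)) p = - t * Bernstein n n p"
        using p01 t(1) by (simp add: shift_effect_toward_right)
      moreover have "shift_effect n 0 (a 0) (max 0 (a 0 - t)) p \<le> t * Bernstein n 0 p"
        using t(1) a p01
        by (intro order_trans[OF shift_effect_le[OF p01]] mult_right_mono Bernstein_nonneg) auto
      moreover have "t * Bernstein n 0 p < t * Bernstein n n p"
        using 2 a p01 n t(1) by (simp add: Bernstein_first_less_last)
      ultimately show ?thesis by linarith
    qed
  qed
  ultimately show False using p(2) by linarith
qed

lemma optimal_maxset_below_estimates:
  assumes opt: "optimal n a" and n: "1 \<le> n"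
  shows "\<exists>p\<in>maxset n a. \<forall>k\<le>n. p < a k"
proof -
  obtain j where j: "j < n" "\<forall>k\<le>n. a j \<le> a k"
  proof -
    have "Min (a ` {..n}) \<in> a ` {..n}" by (rule Min_in) auto
    then obtain i where i: "i \<le> n" "a i = Min (a ` {..n})" by (metis atMost_iff imageE)
    then have min: "\<forall>k\<le>n. a i \<le> a k" by simp
    show ?thesis
    proof (cases "i = n")
      case True
      \<comment> \<open>then \<open>a n \<le> a 0 \<le> 1/2 \<le> a n\<close>, so \<open>a 0\<close> is minimal as well\<close>
      then have "a 0 = a i"
        using min optimal_first_le_half[OF opt] optimal_last_ge_half[OF opt] by force
      then show ?thesis using that[of 0] min n by simp
    qed (use that[of i] i min in auto)
  qed
  have "\<exists>p\<in>maxset n a. p < a j"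
  proof (cases "a j \<in> maxset n a")
    case False
    then show ?thesis using optimal_maxset_below_minimal_estimate[OF opt j] by blast
  next
    case True
    have "a j \<in> {0..1}" "a j < 1"
      using optimal_admissible[OF opt] j optimal_first_le_half[OF opt] unfolding admissible_def by force+
    then have "a j = 0" using interior_estimate_notin_maxset[of j n a] True j by fastforce
    moreover have "j \<noteq> 0" using True optimal_first_notin_maxset[OF opt] by metis
    ultimately have "0 \<notin> maxset n a"
      using optimal_inner_zero_estimate_imp_zero_notin_maxset[OF opt] j by simp
    with True \<open>a j = 0\<close> show ?thesis by simp
  qed
  then show ?thesis using j(2) by force
qed

text \<open>Exchanging heads and tails maps \<open>p\<close> to \<open>1 - p\<close> and \<open>k\<close> heads to \<open>n - k\<close> heads.\<close>
definition reflect :: "nat \<Rightarrow> (nat \<Rightarrow> real) \<Rightarrow> nat \<Rightarrow> real" where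
  "reflect n a k = 1 - a (n - k)"

lemma penalty_reflect: "penalty n (reflect n a) p = penalty n a (1 - p)"
proof -
  have "penalty n (reflect n a) p
      = (\<Sum>k=0..n. real (n choose k) * p ^ k * (1 - p) ^ (n - k) * \<bar>p - (1 - a (n - k))\<bar>)"
    unfolding penalty_def reflect_def by (simp add: atMost_atLeast0)
  also have "\<dots> = (\<Sum>k=0..n. real (n choose (n - k)) * p ^ (n - k) * (1 - p) ^ (n - (n - k))
      * \<bar>p - (1 - a (n - (n - k)))\<bar>)"
    by (subst sum.atLeastAtMost_rev) simp
  also have "\<dots> = (\<Sum>k=0..n. real (n choose k) * (1 - p) ^ k * (1 - (1 - p)) ^ (n - k) * \<bar>(1 - p) - a k\<bar>)"
  proof (intro sum.cong refl)
    fix k assume "k \<in> {0..n}"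
    then have "n - (n - k) = k" "n choose (n - k) = n choose k" "\<bar>p - (1 - a k)\<bar> = \<bar>(1 - p) - a k\<bar>"
      using binomial_symmetric[of k n] by auto
    then show "real (n choose (n - k)) * p ^ (n - k) * (1 - p) ^ (n - (n - k)) * \<bar>p - (1 - a (n - (n - k)))\<bar>
        = real (n choose k) * (1 - p) ^ k * (1 - (1 - p)) ^ (n - k) * \<bar>(1 - p) - a k\<bar>" by simp
  qed
  also have "\<dots> = penalty n a (1 - p)" unfolding penalty_def by (simp add: atMost_atLeast0)
  finally show ?thesis .
qed

lemma supnorm_reflect: "supnorm n (reflect n a) = supnorm n a"
proof (rule antisym)
  obtain q where "q \<in> {0..1}" "penalty n (reflect n a) q = supnorm n (reflect n a)"
    using supnorm_attained by blast
  then show "supnorm n (reflect n a) \<le> supnorm n a"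
    using penalty_le_supnorm[of "1 - q" n a] by (simp add: penalty_reflect)
next
  obtain q where "q \<in> {0..1}" "penalty n a q = supnorm n a"
    using supnorm_attained by blast
  then show "supnorm n a \<le> supnorm n (reflect n a)"
    using penalty_le_supnorm[of "1 - q" n "reflect n a"] by (simp add: penalty_reflect)
qed

lemma admissible_reflect: "admissible n a \<Longrightarrow> admissible n (reflect n a)"
  unfolding admissible_def reflect_def by auto

lemma optimal_reflect:
  assumes opt: "optimal n a"
  shows "optimal n (reflect n a)"
  unfolding optimal_def
proof (intro conjI allI impI)
  show "admissible n (reflect n a)" using admissible_reflect optimal_admissible[OF opt] by blast
  fix b assume "admissible n b"
  then have "supnorm n a \<le> supnorm n (reflect n b)"
    using opt admissible_reflect unfolding optimal_def by blast
  then show "supnorm n (reflect n a) \<le> supnorm n b" by (simp add: supnorm_reflect)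
qed

lemma maxset_reflect: "p \<in> maxset n (reflect n a) \<longleftrightarrow> 1 - p \<in> maxset n a"
  unfolding maxset_def by (auto simp: penalty_reflect supnorm_reflect)

lemma optimal_maxset_above_estimates:
  assumes opt: "optimal n a" and n: "1 \<le> n"
  shows "\<exists>q\<in>maxset n a. \<forall>k\<le>n. a k < q"
proof -
  obtain p where p: "p \<in> maxset n (reflect n a)" "\<forall>k\<le>n. p < reflect n a k"
    using optimal_maxset_below_estimates[OF optimal_reflect[OF opt] n] by blast
  have "a k < 1 - p" if "k \<le> n" for k
    using p(2)[rule_format, of "n - k"] that by (simp add: reflect_def)
  with p(1) show ?thesis unfolding maxset_reflect by blast
qed

theorem lemma2p1:
  fixes n :: nat and a :: "nat \<Rightarrow> real"
  assumes "n \<ge> 1" and "optimal n a"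
  shows "maxset n a \<inter> a ` {..n} = {} \<and>
         maxset n a \<inter> {0..<Min (a ` {..n})} \<noteq> {} \<and>
         maxset n a \<inter> {Max (a ` {..n})<..1} \<noteq> {} \<and>
         (a 0 \<le> 1/2 \<and> 1/2 \<le> a n \<and> maxset n a \<inter> {a 0<..<a n} \<noteq> {})"
proof -
  obtain p where p: "p \<in> maxset n a" "\<forall>k\<le>n. p < a k"
    using optimal_maxset_below_estimates[OF assms(2,1)] by blast
  obtain q where q: "q \<in> maxset n a" "\<forall>k\<le>n. a k < q"
    using optimal_maxset_above_estimates[OF assms(2,1)] by blast
  have "0 \<le> p" "q \<le> 1" using p(1) q(1) unfolding maxset_def by auto
  have "a k \<notin> maxset n a" if "k \<le> n" for k
  proof -
    have "0 < a k" "a k < 1" using p q \<open>0 \<le> p\<close> \<open>q \<le> 1\<close> that by force+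
    then show ?thesis using interior_estimate_notin_maxset[OF that] by simp
  qed
  moreover have "p < Min (a ` {..n})" "Max (a ` {..n}) < q" using p(2) q(2) by auto
  ultimately show ?thesis
    using p q \<open>0 \<le> p\<close> \<open>q \<le> 1\<close> optimal_first_le_half[OF assms(2)] optimal_last_ge_half[OF assms(2)]
      optimal_maxset_meets_middle[OF assms(2,1)] by auto
qed

end
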